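(* Let $n$ be a nonnegative integer and let $a_j,b_j,c_j,d_j$ ($j=0,\dots,n$) be indeterminates (nonzero complex numbers). Then \begin{multline*} \sum_{k=0}^n \frac{b_k}{c_k}\, E(a_kb_k)E(a_k/b_k)E(c_kd_k)E(c_k/d_k) \prod_{j=0}^{k-1}E(a_jc_j)E(a_j/c_j)E(b_jd_j)E(b_j/d_j)\\ \times\prod_{j=k+1}^n E(a_jd_j)E(a_j/d_j)E(b_jc_j)E(b_j/c_j) \\ =\prod_{j=0}^n E(a_jc_j)E(a_j/c_j)E(b_jd_j)E(b_j/d_j) -\prod_{j=0}^n E(a_jd_j)E(a_j/d_j)E(b_jc_j)E(b_j/c_j). \end{multline*}
   Context: Let $p$ be a complex number with $|p|<1$. For nonzero $x$, $E(x)=E(x;p)=\prod_{k\ge 0}(1-xp^k)(1-p^{k+1}/x)$. Empty products equal $1$. *)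

theory Defs
  imports "HOL-Analysis.Analysis"
begin

definition E :: "complex \<Rightarrow> complex \<Rightarrow> complex" where
  "E p x = (\<Prod>k. (1 - x * p ^ k) * (1 - p ^ (k + 1) / x))"

end

theory Submission
  imports Defs "HOL-Complex_Analysis.Complex_Analysis"
begin

(* Write A_j and B_j for the j-th factors of the two products on the right. By the
   three-term addition formula

     E(xy^{+-1}) E(uv^{+-1}) - E(xv^{+-1}) E(uy^{+-1}) = (u/y) E(yv^{+-1}) E(xu^{+-1}),

   where E(xw^{+-1}) = E(xw) E(x/w), taken at (x, y, u, v) = (a_k, c_k, b_k, d_k), the k-th
   summand is (A_k - B_k) A_0 ... A_{k-1} B_{k+1} ... B_n, so the sum telescopes.

   For the addition formula, E(x) = (x;p)_oo (p/x;p)_oo gives E(px) = E(1/x) = -E(x)/x. Hence,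
   as functions of x, both sides are holomorphic on C - {0} and pick up the factor 1/x^2 under
   x -> px. The left side vanishes at the zeros p^Z u^{+-1} of E(xu^{+-1}), and these are simple
   when u^2 is not in p^Z. Its quotient by E(xu^{+-1}) is then a p-periodic holomorphic function
   on C - {0}, bounded because it takes all its values on the annulus |p| <= |x| <= 1, hence
   constant by Liouville's theorem applied after composing with exp; the constant is read off
   at x = v. The excluded parameters u form a countable set and are recovered by continuity. *)

section \<open>Holomorphic infinite products\<close>

lemma summable_norm_minus_one_imp_has_prod:
  fixes f :: "nat \<Rightarrow> complex"
  assumes "summable (\<lambda>k. norm (f k - 1))"
  shows "f has_prod (\<Prod>k. f k)"
  using assms abs_convergent_prod_conv_summable abs_convergent_prod_imp_convergent_prod
    convergent_prod_has_prod by blast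

lemma uniform_limit_prodinf_Weierstrass:
  fixes f :: "nat \<Rightarrow> complex \<Rightarrow> complex"
  assumes K: "compact K" "\<And>k. continuous_on K (f k)"
    and M: "summable M" "\<And>k w. w \<in> K \<Longrightarrow> norm (f k w - 1) \<le> M k"
  shows "uniform_limit K (\<lambda>n w. \<Prod>k<n. f k w) (\<lambda>w. \<Prod>k. f k w) sequentially"
proof -
  have "uniformly_convergent_on K (\<lambda>n w. \<Prod>k<n. f k w)"
  proof (rule uniformly_convergent_on_prod'[OF K(2,1)])
    show "uniformly_convergent_on K (\<lambda>n w. \<Sum>k<n. norm (f k w - 1))"
      by (rule Weierstrass_m_test'[OF _ M(1)]) (use M(2) in auto)
  qed
  then obtain l where l: "uniform_limit K (\<lambda>n w. \<Prod>k<n. f k w) l sequentially"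
    unfolding uniformly_convergent_on_def by blast
  have l_eq: "l w = (\<Prod>k. f k w)" if w: "w \<in> K" for w
  proof -
    have "summable (\<lambda>k. norm (f k w - 1))"
      by (rule summable_comparison_test'[OF M(1)]) (use M(2) w in auto)
    then have "(\<lambda>n. \<Prod>k<n. f k w) \<longlonglongrightarrow> (\<Prod>k. f k w)"
      by (rule has_prod_imp_tendsto'[OF summable_norm_minus_one_imp_has_prod])
    with tendsto_uniform_limitI[OF l w] show ?thesis
      using LIMSEQ_unique by blast
  qed
  show ?thesis
    using l uniform_limit_cong'[of K "\<lambda>n w. \<Prod>k<n. f k w" "\<lambda>n w. \<Prod>k<n. f k w" l
        "\<lambda>w. \<Prod>k. f k w"] l_eq by simp
qed

lemma holomorphic_on_prodinf:
  fixes f :: "nat \<Rightarrow> complex \<Rightarrow> complex"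
  assumes S: "open S" and holo: "\<And>k. f k holomorphic_on S"
    and bound: "\<And>z. z \<in> S \<Longrightarrow> \<exists>r>0. cball z r \<subseteq> S \<and>
                  (\<exists>M. summable M \<and> (\<forall>k. \<forall>w\<in>cball z r. norm (f k w - 1) \<le> M k))"
  shows "(\<lambda>w. \<Prod>k. f k w) holomorphic_on S"
proof -
  have "\<exists>e>0. (\<lambda>w. \<Prod>k. f k w) holomorphic_on ball z e" if z: "z \<in> S" for z
  proof -
    obtain r M where r: "r > 0" "cball z r \<subseteq> S" and M: "summable M"
      and rM: "\<And>k w. w \<in> cball z r \<Longrightarrow> norm (f k w - 1) \<le> M k"
      using bound[OF z] by blast
    have partial_holo: "(\<lambda>w. \<Prod>k<n. f k w) holomorphic_on S" for n
      by (intro holomorphic_on_prod) (use holo in auto)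
    have "continuous_on (cball z r) (f k)" for k
      using holo r(2) holomorphic_on_imp_continuous_on holomorphic_on_subset by blast
    from uniform_limit_prodinf_Weierstrass[OF _ this M rM]
    have lim: "uniform_limit (cball z r) (\<lambda>n w. \<Prod>k<n. f k w) (\<lambda>w. \<Prod>k. f k w) sequentially"
      by simp
    have "(\<lambda>w. \<Prod>k. f k w) holomorphic_on ball z r"
    proof (rule holomorphic_uniform_limit[OF _ lim])
      show "\<forall>\<^sub>F n in sequentially. continuous_on (cball z r) (\<lambda>w. \<Prod>k<n. f k w)
          \<and> (\<lambda>w. \<Prod>k<n. f k w) holomorphic_on ball z r"
        by (intro always_eventually allI conjI holomorphic_on_imp_continuous_on
            holomorphic_on_subset[OF partial_holo]) (use r(2) ball_subset_cball in auto)
    qed auto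
    with r(1) show ?thesis by blast
  qed
  with S show ?thesis
    using analytic_on_def analytic_on_open by blast
qed

lemma holomorphic_on_compose_punctured:
  assumes "f holomorphic_on -{0}" "g holomorphic_on -{0}" "\<And>w. w \<noteq> 0 \<Longrightarrow> g w \<noteq> 0"
  shows "(\<lambda>w. f (g w)) holomorphic_on -{0}"
proof -
  have "g ` (-{0}) \<subseteq> -{0}"
    using assms(3) by (intro image_subsetI) simp
  from holomorphic_on_compose_gen[OF assms(2,1) this] show ?thesis
    by (simp add: o_def)
qed

section \<open>The q-Pochhammer symbol and the functional equations of E\<close>

definition qpochhammer_inf :: "complex \<Rightarrow> complex \<Rightarrow> complex" where
  "qpochhammer_inf p x = (\<Prod>k. 1 - x * p ^ k)"

lemma qpochhammer_inf_has_prod: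
  assumes "norm p < 1"
  shows "(\<lambda>k. 1 - x * p ^ k) has_prod qpochhammer_inf p x"
proof -
  have "summable (\<lambda>k. norm x * norm p ^ k)"
    using assms by (intro summable_mult summable_geometric) auto
  then show ?thesis
    unfolding qpochhammer_inf_def
    by (intro summable_norm_minus_one_imp_has_prod) (simp add: norm_mult norm_power)
qed

lemma qpochhammer_inf_shift:
  assumes "norm p < 1"
  shows "qpochhammer_inf p x = (1 - x) * qpochhammer_inf p (p * x)"
proof -
  have "(\<lambda>k. 1 - x * p ^ Suc k) has_prod qpochhammer_inf p (p * x)"
    using qpochhammer_inf_has_prod[OF assms, of "p * x"] by (simp add: mult_ac)
  from has_prod_Suc_imp[OF this]
  have "(\<lambda>k. 1 - x * p ^ k) has_prod (qpochhammer_inf p (p * x) * (1 - x))"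
    by simp
  then show ?thesis
    using has_prod_unique2[OF qpochhammer_inf_has_prod[OF assms]] by (simp add: mult.commute)
qed

lemma qpochhammer_inf_eq_0_iff:
  assumes "norm p < 1"
  shows "qpochhammer_inf p x = 0 \<longleftrightarrow> (\<exists>k. x * p ^ k = 1)"
  using has_prod_eq_0_iff[OF qpochhammer_inf_has_prod[OF assms]]
  by (metis (no_types, lifting) rangeE rangeI right_minus_eq)

lemma qpochhammer_inf_at_p_nonzero:
  assumes "norm p < 1"
  shows "qpochhammer_inf p p \<noteq> 0"
proof -
  have "norm (p * p ^ k) < 1" for k
    using assms by (simp add: norm_mult norm_power power_less_one_iff flip: power_Suc)
  then show ?thesis
    using assms by (metis qpochhammer_inf_eq_0_iff norm_one order_less_irrefl)
qed

lemma holomorphic_qpochhammer_inf: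
  assumes "norm p < 1"
  shows "qpochhammer_inf p holomorphic_on UNIV"
proof -
  have "(\<lambda>x. \<Prod>k. 1 - x * p ^ k) holomorphic_on UNIV"
  proof (rule holomorphic_on_prodinf)
    fix z :: complex
    have "norm (1 - w * p ^ k - 1) \<le> (norm z + 1) * norm p ^ k" if "w \<in> cball z 1" for k w
    proof -
      have "norm w \<le> norm z + 1"
        using that norm_triangle_sub[of w z] by (auto simp: dist_norm norm_minus_commute)
      have "norm (1 - w * p ^ k - 1) = norm w * norm p ^ k"
        by (simp add: norm_mult norm_power)
      also have "\<dots> \<le> (norm z + 1) * norm p ^ k"
        by (rule mult_right_mono) (use \<open>norm w \<le> norm z + 1\<close> in auto)
      finally show ?thesis .
    qed
    moreover have "summable (\<lambda>k. (norm z + 1) * norm p ^ k)"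
      using assms by (intro summable_mult summable_geometric) auto
    ultimately show "\<exists>r>0. cball z r \<subseteq> UNIV \<and>
        (\<exists>M. summable M \<and> (\<forall>k. \<forall>w\<in>cball z r. norm (1 - w * p ^ k - 1) \<le> M k))"
      by (intro exI[of _ 1] conjI exI[of _ "\<lambda>k. (norm z + 1) * norm p ^ k"]) auto
  qed (auto intro!: holomorphic_intros)
  then show ?thesis
    by (simp add: qpochhammer_inf_def[abs_def])
qed

lemma holomorphic_qpochhammer_inf_compose [holomorphic_intros]:
  assumes "norm p < 1" "f holomorphic_on A"
  shows "(\<lambda>w. qpochhammer_inf p (f w)) holomorphic_on A"
  using holomorphic_on_compose_gen[OF assms(2) holomorphic_qpochhammer_inf[OF assms(1)]]
  by (simp add: o_def)

lemma E_eq_qpochhammer_inf: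
  assumes "norm p < 1"
  shows "E p x = qpochhammer_inf p x * qpochhammer_inf p (p / x)"
proof -
  have conv: "convergent_prod (\<lambda>k. 1 - y * p ^ k)" for y
    using qpochhammer_inf_has_prod[OF assms] has_prod_iff by blast
  have "qpochhammer_inf p x * qpochhammer_inf p (p / x)
      = (\<Prod>k. (1 - x * p ^ k) * (1 - p / x * p ^ k))"
    unfolding qpochhammer_inf_def by (rule prodinf_mult[OF conv conv])
  then show ?thesis
    by (simp add: E_def mult_ac)
qed

lemma E_eq_1_minus_mult:
  assumes "norm p < 1"
  shows "E p x = (1 - x) * (qpochhammer_inf p (p * x) * qpochhammer_inf p (p / x))"
  using assms by (simp add: E_eq_qpochhammer_inf qpochhammer_inf_shift[of p x])

lemma E_nome_0: "E 0 x = 1 - x"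
proof -
  have "qpochhammer_inf 0 0 = 1"
    by (simp add: qpochhammer_inf_def)
  then show ?thesis
    by (simp add: E_eq_1_minus_mult)
qed

lemma E_1: "norm p < 1 \<Longrightarrow> E p 1 = 0"
  by (simp add: E_eq_1_minus_mult)

lemma E_inverse:
  assumes "norm p < 1" "x \<noteq> 0"
  shows "E p (1 / x) = - E p x / x"
proof -
  have "E p (1 / x) = (1 - 1 / x) * (qpochhammer_inf p (p * x) * qpochhammer_inf p (p / x))"
    using assms(1) by (simp add: E_eq_qpochhammer_inf qpochhammer_inf_shift[of p "1 / x"] mult_ac)
  also have "\<dots> = - ((1 - x) * (qpochhammer_inf p (p * x) * qpochhammer_inf p (p / x))) / x"
    using assms(2) by (simp add: field_simps)
  also have "\<dots> = - E p x / x"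
    using assms(1) by (simp add: E_eq_1_minus_mult)
  finally show ?thesis .
qed

lemma E_mult_p:
  assumes "norm p < 1" "p \<noteq> 0" "x \<noteq> 0"
  shows "E p (p * x) = - E p x / x"
proof -
  have "E p (p * x) = E p (1 / x)"
    using assms by (simp add: E_eq_qpochhammer_inf mult.commute)
  then show ?thesis
    using E_inverse[OF assms(1,3)] by simp
qed

lemma E_eq_0_imp_powi:
  assumes "norm p < 1" "x \<noteq> 0" "E p x = 0"
  shows "\<exists>m::int. x = p powi m"
proof -
  have "(\<exists>k. x * p ^ k = 1) \<or> (\<exists>k. p / x * p ^ k = 1)"
    using assms by (simp add: E_eq_qpochhammer_inf qpochhammer_inf_eq_0_iff)
  then show ?thesis
  proof (elim disjE exE)
    fix k assume "x * p ^ k = 1"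
    then have "x = p powi (- int k)"
      using inverse_unique[of "p ^ k" x] by (simp add: power_int_minus mult.commute)
    then show ?thesis ..
  next
    fix k assume "p / x * p ^ k = 1"
    then have "x = p powi (int k + 1)"
      using assms(2) by (simp add: power_int_add field_simps)
    then show ?thesis ..
  qed
qed

lemma holomorphic_E:
  assumes "norm p < 1"
  shows "E p holomorphic_on -{0}"
proof -
  have "(\<lambda>x. qpochhammer_inf p x * qpochhammer_inf p (p / x)) holomorphic_on -{0}"
    using assms by (auto intro!: holomorphic_intros)
  moreover have "E p = (\<lambda>x. qpochhammer_inf p x * qpochhammer_inf p (p / x))"
    using assms by (simp add: fun_eq_iff E_eq_qpochhammer_inf)
  ultimately show ?thesis
    by simp
qed

lemma holomorphic_E_compose [holomorphic_intros]:
  assumes "norm p < 1" "f holomorphic_on A" "\<And>w. w \<in> A \<Longrightarrow> f w \<noteq> 0"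
  shows "(\<lambda>w. E p (f w)) holomorphic_on A"
proof -
  have "f ` A \<subseteq> -{0}"
    using assms(3) by (intro image_subsetI) simp
  from holomorphic_on_compose_gen[OF assms(2) holomorphic_E[OF assms(1)] this] show ?thesis
    by (simp add: o_def)
qed

section \<open>Functions on the punctured plane that are multiplicatively periodic\<close>

lemma powi_mult_invariant:
  fixes Q :: "complex \<Rightarrow> 'a"
  assumes p: "p \<noteq> 0" and Q: "\<And>x. x \<noteq> 0 \<Longrightarrow> Q (p * x) = Q x" and x: "x \<noteq> 0"
  shows "Q (p powi m * x) = Q x"
proof (induction m rule: int_induct[where k=0])
  case base
  show ?case by simp
next
  case (step1 i)
  have "Q (p powi (i + 1) * x) = Q (p * (p powi i * x))"
    using p by (simp add: power_int_add_1' mult.assoc)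
  also have "\<dots> = Q x"
    using Q[of "p powi i * x"] p x step1 by simp
  finally show ?case .
next
  case (step2 i)
  have "Q (p powi i * x) = Q (p * (p powi (i - 1) * x))"
    using p power_int_add_1'[of p "i - 1"] by (simp add: mult.assoc)
  then show ?case
    using Q[of "p powi (i - 1) * x"] p x step2 by simp
qed

lemma exists_powi_mult_in_annulus:
  fixes p x :: complex
  assumes p: "norm p < 1" "p \<noteq> 0" and x: "x \<noteq> 0"
  shows "\<exists>m::int. norm p \<le> norm (p powi m * x) \<and> norm (p powi m * x) \<le> 1"
proof -
  define L where "L = ln (norm p)"
  have L: "L < 0" "exp L = norm p"
    using p by (simp_all add: L_def)
  define m where "m = \<lceil>ln (norm x) / - L\<rceil>"
  have "m * L \<le> - ln (norm x)" "- ln (norm x) + L \<le> m * L"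
  proof -
    have "ln (norm x) / - L \<le> m" "m < ln (norm x) / - L + 1"
      unfolding m_def by linarith+
    with L(1) show "m * L \<le> - ln (norm x)" "- ln (norm x) + L \<le> m * L"
      by (simp_all add: field_simps)
  qed
  moreover have "norm (p powi m * x) = exp (m * L + ln (norm x))"
    using x by (simp add: norm_mult norm_power_int exp_add exp_power_int flip: L(2))
  ultimately show ?thesis
    unfolding L(2)[symmetric] by (intro exI[of _ m]) simp
qed

lemma mult_periodic_holomorphic_imp_constant:
  assumes p: "norm p < 1" "p \<noteq> 0" and g: "g holomorphic_on -{0}"
    and periodic: "\<And>x. x \<noteq> 0 \<Longrightarrow> g (p * x) = g x"
  shows "\<exists>c. \<forall>x. x \<noteq> 0 \<longrightarrow> g x = c"
proof -
  define A where "A = cball 0 1 - ball (0::complex) (norm p)"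
  have "compact A" "A \<subseteq> -{0}"
    using p by (auto simp: A_def intro!: compact_diff)
  then have "bounded (g ` A)"
    using g by (meson compact_continuous_image compact_imp_bounded holomorphic_on_imp_continuous_on
        holomorphic_on_subset)
  then obtain B where B: "\<And>x. x \<in> A \<Longrightarrow> norm (g x) \<le> B"
    unfolding bounded_iff by blast
  have bound: "norm (g x) \<le> B" if x: "x \<noteq> 0" for x
  proof -
    obtain m where "norm p \<le> norm (p powi m * x)" "norm (p powi m * x) \<le> 1"
      using exists_powi_mult_in_annulus[OF p x] by blast
    then have "p powi m * x \<in> A"
      by (simp add: A_def)
    with B powi_mult_invariant[of p g, OF p(2) periodic x] show ?thesis
      by metis
  qed
  then have "bounded (range (g \<circ> exp))"
    unfolding bounded_iff by (intro exI[of _ B]) auto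
  moreover have "(g \<circ> exp) holomorphic_on UNIV"
    by (rule holomorphic_on_compose_gen[OF _ g]) (auto intro: holomorphic_intros)
  ultimately obtain c where "\<And>z. g (exp z) = c"
    using Liouville_theorem unfolding constant_on_def by (metis UNIV_I comp_apply)
  then have "g x = c" if "x \<noteq> 0" for x
    using that by (metis exp_Ln)
  then show ?thesis by blast
qed

section \<open>Simple zeros and quotients\<close>

definition simple_zero_on :: "complex set \<Rightarrow> (complex \<Rightarrow> complex) \<Rightarrow> complex \<Rightarrow> bool" where
  "simple_zero_on A f z \<longleftrightarrow> (\<exists>g. g holomorphic_on A \<and> g z \<noteq> 0 \<and> (\<forall>w\<in>A. f w = (w - z) * g w))"

lemma simple_zero_on_mult:
  assumes "simple_zero_on A f z" "h holomorphic_on A" "h z \<noteq> 0"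
  shows "simple_zero_on A (\<lambda>w. f w * h w) z" "simple_zero_on A (\<lambda>w. h w * f w) z"
proof -
  obtain g where "g holomorphic_on A" "g z \<noteq> 0" "\<And>w. w \<in> A \<Longrightarrow> f w = (w - z) * g w"
    using assms(1) by (auto simp: simple_zero_on_def)
  with assms(2,3) have "\<exists>g. g holomorphic_on A \<and> g z \<noteq> 0 \<and> (\<forall>w\<in>A. f w * h w = (w - z) * g w)"
    by (intro exI[of _ "\<lambda>w. g w * h w"]) (auto intro!: holomorphic_intros)
  then show "simple_zero_on A (\<lambda>w. f w * h w) z" "simple_zero_on A (\<lambda>w. h w * f w) z"
    by (simp_all add: simple_zero_on_def mult.commute)
qed

lemma simple_zero_on_punctured_scale:
  assumes c: "c \<noteq> 0" and "simple_zero_on (-{0}) f (c * z)"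
  shows "simple_zero_on (-{0}) (\<lambda>w. f (c * w)) z"
proof -
  obtain g where g: "g holomorphic_on -{0}" "g (c * z) \<noteq> 0"
    and f: "\<And>w. w \<noteq> 0 \<Longrightarrow> f w = (w - c * z) * g w"
    using assms(2) by (auto simp: simple_zero_on_def)
  have "(\<lambda>w. c * g (c * w)) holomorphic_on -{0}"
    using c by (intro holomorphic_intros holomorphic_on_compose_punctured[OF g(1)]) auto
  moreover have "f (c * w) = (w - z) * (c * g (c * w))" if "w \<noteq> 0" for w
    using f[of "c * w"] c that by (simp add: algebra_simps)
  ultimately show ?thesis
    using c g(2) unfolding simple_zero_on_def by (intro exI[of _ "\<lambda>w. c * g (c * w)"]) auto
qed

lemma simple_zero_on_punctured_mult_imp:
  assumes p: "p \<noteq> 0" and a: "a holomorphic_on -{0}" "\<And>w. w \<noteq> 0 \<Longrightarrow> a w \<noteq> 0"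
    and f: "\<And>w. w \<noteq> 0 \<Longrightarrow> f (p * w) = a w * f w"
    and z: "z \<noteq> 0" "simple_zero_on (-{0}) f (p * z)"
  shows "simple_zero_on (-{0}) f z"
proof -
  obtain g where g: "g holomorphic_on -{0}" "g (p * z) \<noteq> 0"
    and fg: "\<And>w. w \<noteq> 0 \<Longrightarrow> f w = (w - p * z) * g w"
    using z(2) by (auto simp: simple_zero_on_def)
  have "(\<lambda>w. p * g (p * w) / a w) holomorphic_on -{0}"
    using p a by (intro holomorphic_intros holomorphic_on_compose_punctured[OF g(1)]) auto
  moreover have "f w = (w - z) * (p * g (p * w) / a w)" if "w \<noteq> 0" for w
  proof -
    have "a w * f w = (w - z) * (p * g (p * w))"
      using f[OF that] fg[of "p * w"] p that by (simp add: algebra_simps)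
    then show ?thesis
      using a(2)[OF that] by (simp add: field_simps)
  qed
  ultimately show ?thesis
    using p g(2) a(2)[OF z(1)] unfolding simple_zero_on_def
    by (intro exI[of _ "\<lambda>w. p * g (p * w) / a w"]) auto
qed

lemma simple_zero_on_punctured_quasiperiodic:
  assumes p: "p \<noteq> 0" and a: "a holomorphic_on -{0}" "\<And>w. w \<noteq> 0 \<Longrightarrow> a w \<noteq> 0"
    and f: "\<And>w. w \<noteq> 0 \<Longrightarrow> f (p * w) = a w * f w"
  shows "simple_zero_on (-{0}) f (p * z) \<longleftrightarrow> simple_zero_on (-{0}) f z"
proof (cases "z = 0")
  case False
  have f': "f (1 / p * w) = 1 / a (w / p) * f w" if "w \<noteq> 0" for w
    using f[of "w / p"] a(2)[of "w / p"] p that by simp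
  have "(\<lambda>w. 1 / a (w / p)) holomorphic_on -{0}"
    using p a by (intro holomorphic_intros holomorphic_on_compose_punctured[OF a(1)]) auto
  moreover have "1 / a (w / p) \<noteq> 0" if "w \<noteq> 0" for w
    using a(2) p that by simp
  ultimately have a': "(\<lambda>w. 1 / a (w / p)) holomorphic_on -{0}" "\<And>w. w \<noteq> 0 \<Longrightarrow> 1 / a (w / p) \<noteq> 0"
    by blast+
  have "p * z \<noteq> 0"
    using p False by simp
  from simple_zero_on_punctured_mult_imp[OF _ a' f' this] p
  have "simple_zero_on (-{0}) f z \<Longrightarrow> simple_zero_on (-{0}) f (p * z)"
    by simp
  then show ?thesis
    using simple_zero_on_punctured_mult_imp[OF p a f False] by blast
qed simp

lemma simple_zero_quotient_eventually_analytic: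
  assumes A: "open A" "z \<in> A" and N: "N holomorphic_on A" "N z = 0"
    and D: "simple_zero_on A D z"
  shows "\<exists>h. h analytic_on {z} \<and> (\<forall>\<^sub>F w in at z. N w / D w = h w)"
proof -
  obtain T where T: "T holomorphic_on A" "T z \<noteq> 0" and DT: "\<And>w. w \<in> A \<Longrightarrow> D w = (w - z) * T w"
    using D by (auto simp: simple_zero_on_def)
  define M where "M w = (if w = z then deriv N z else (N w - N z) / (w - z))" for w
  have "M holomorphic_on A"
    unfolding M_def[abs_def] using N(1) A(1) by (rule pole_lemma_open)
  then have "(\<lambda>w. M w / T w) analytic_on {z}"
    using T A by (intro analytic_intros holomorphic_on_imp_analytic_at) auto
  moreover have "\<forall>\<^sub>F w in at z. N w / D w = M w / T w"
    using eventually_at_in_open[OF A]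
  proof eventually_elim
    case (elim w)
    then show ?case
      using DT N(2) by (auto simp: M_def)
  qed
  ultimately show ?thesis
    by blast
qed

lemma remove_sings_quotient_simple_zeros:
  assumes A: "open A" and holo: "N holomorphic_on A" "D holomorphic_on A"
    and zeros: "\<And>x. x \<in> A \<Longrightarrow> D x = 0 \<Longrightarrow> N x = 0 \<and> simple_zero_on A D x"
  defines "r \<equiv> \<lambda>x. N x / D x"
  shows "remove_sings r holomorphic_on A" "\<And>x. x \<in> A \<Longrightarrow> r \<midarrow>x\<rightarrow> remove_sings r x"
proof -
  have removable: "\<exists>h. h analytic_on {z} \<and> (\<forall>\<^sub>F w in at z. r w = h w)" if z: "z \<in> A" for z
  proof (cases "D z = 0")
    case True
    then show ?thesis
      unfolding r_def using zeros[OF z True] holo z A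
      by (intro simple_zero_quotient_eventually_analytic) auto
  next
    case False
    have "r analytic_on {z}"
      unfolding r_def using holo z False A
      by (intro analytic_intros holomorphic_on_imp_analytic_at[of _ A]) auto
    then show ?thesis
      by (intro exI[of _ r]) auto
  qed
  have local: "isolated_singularity_at r z \<and> r \<midarrow>z\<rightarrow> remove_sings r z" if z: "z \<in> A" for z
  proof -
    obtain h where h: "h analytic_on {z}" "\<forall>\<^sub>F w in at z. r w = h w"
      using removable[OF z] by blast
    have "isolated_singularity_at r z"
      using isolated_singularity_at_cong[OF h(2) refl] isolated_singularity_at_analytic[OF h(1)] by simp
    moreover have "r \<midarrow>z\<rightarrow> h z"
      using analytic_at_imp_isCont[OF h(1)] tendsto_cong[OF h(2)] by (simp add: isCont_def)
    ultimately show ?thesis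
      using remove_sings_eqI by metis
  qed
  then show "r \<midarrow>x\<rightarrow> remove_sings r x" if "x \<in> A" for x
    using that by blast
  have "remove_sings r analytic_on {z}" if "z \<in> A" for z
    using local[OF that] by (intro remove_sings_analytic_at) auto
  then show "remove_sings r holomorphic_on A"
    using A analytic_on_analytic_at analytic_on_open by blast
qed

lemma remove_sings_mult_periodic:
  assumes p: "p \<noteq> 0" and periodic: "\<And>w. w \<noteq> 0 \<Longrightarrow> r (p * w) = r w" and x: "x \<noteq> 0"
    and lim: "r \<midarrow>p * x\<rightarrow> remove_sings r (p * x)"
  shows "remove_sings r (p * x) = remove_sings r x"
proof -
  have "\<forall>\<^sub>F w in at x. p * w = p * x \<longrightarrow> r (p * x) = remove_sings r (p * x)"
    using eventually_neq_at_within[of x x UNIV] by eventually_elim (use p in auto)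
  then have "((r \<circ> (\<lambda>w. p * w)) \<longlongrightarrow> remove_sings r (p * x)) (at x)"
    using lim by (intro tendsto_compose_at[where y="p * x"] tendsto_intros) auto
  moreover have "\<forall>\<^sub>F w in at x. w \<in> -{0}"
    by (rule eventually_at_in_open') (use x in auto)
  then have "\<forall>\<^sub>F w in at x. (r \<circ> (\<lambda>w. p * w)) w = r w"
    by eventually_elim (use periodic in auto)
  ultimately have "r \<midarrow>x\<rightarrow> remove_sings r (p * x)"
    using tendsto_cong by blast
  then show ?thesis
    by (rule remove_sings_eqI[symmetric])
qed

lemma quasiperiodic_quotient_constant:
  assumes p: "norm p < 1" "p \<noteq> 0"
    and holo: "N holomorphic_on -{0}" "D holomorphic_on -{0}"
    and quasiperiodic: "\<And>x. x \<noteq> 0 \<Longrightarrow> a x \<noteq> 0 \<and> N (p * x) = a x * N x \<and> D (p * x) = a x * D x"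
    and zeros: "\<And>x. x \<noteq> 0 \<Longrightarrow> D x = 0 \<Longrightarrow> N x = 0 \<and> simple_zero_on (-{0}) D x"
  shows "\<exists>K. \<forall>x. x \<noteq> 0 \<longrightarrow> N x = K * D x"
proof -
  define r where "r x = N x / D x" for x
  define g where "g = remove_sings r"
  have g_holo: "g holomorphic_on -{0}" and lim: "\<And>x. x \<noteq> 0 \<Longrightarrow> r \<midarrow>x\<rightarrow> g x"
    using remove_sings_quotient_simple_zeros[of "-{0}" N D] holo zeros
    by (auto simp: g_def r_def[abs_def])
  have "r (p * w) = r w" if "w \<noteq> 0" for w
    using quasiperiodic[OF that] by (simp add: r_def)
  then have "g (p * x) = g x" if "x \<noteq> 0" for x
    using p(2) that lim[of "p * x"] unfolding g_def by (intro remove_sings_mult_periodic) auto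
  then obtain K where K: "\<And>x. x \<noteq> 0 \<Longrightarrow> g x = K"
    using mult_periodic_holomorphic_imp_constant[OF p g_holo] by blast
  have "N x = K * D x" if x: "x \<noteq> 0" for x
  proof (cases "D x = 0")
    case False
    then have "r analytic_on {x}"
      unfolding r_def using holo x
      by (intro analytic_intros holomorphic_on_imp_analytic_at[of _ "-{0}"]) auto
    then have "g x = N x / D x"
      by (simp add: g_def r_def)
    with K[OF x] False show ?thesis
      by (simp add: field_simps)
  qed (use zeros x in auto)
  then show ?thesis
    by blast
qed

section \<open>The addition formula\<close>

lemma simple_zero_E_1:
  assumes "norm p < 1"
  shows "simple_zero_on (-{0}) (E p) 1"
proof -
  define R where "R w = qpochhammer_inf p (p * w) * qpochhammer_inf p (p / w)" for w
  have "(\<lambda>w. - R w) holomorphic_on -{0}"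
    unfolding R_def using assms by (auto intro!: holomorphic_intros)
  moreover have "- R 1 \<noteq> 0"
    using qpochhammer_inf_at_p_nonzero[OF assms] by (simp add: R_def)
  moreover have "E p w = (w - 1) * - R w" for w
    using assms by (simp add: E_eq_1_minus_mult R_def algebra_simps)
  ultimately show ?thesis
    unfolding simple_zero_on_def by blast
qed

lemma simple_zero_E:
  assumes p: "norm p < 1" "p \<noteq> 0" and x: "x \<noteq> 0" "E p x = 0"
  shows "simple_zero_on (-{0}) (E p) x"
proof -
  obtain m where m: "x = p powi m"
    using E_eq_0_imp_powi[OF p(1) x] by blast
  have "simple_zero_on (-{0}) (E p) (p * z) = simple_zero_on (-{0}) (E p) z" for z
    by (rule simple_zero_on_punctured_quasiperiodic[where a="\<lambda>w. - 1 / w"])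
      (use p in \<open>auto intro!: holomorphic_intros simp: E_mult_p\<close>)
  from powi_mult_invariant[of p "simple_zero_on (-{0}) (E p)", OF p(2) this, of 1 m]
  show ?thesis
    using simple_zero_E_1[OF p(1)] m by simp
qed

definition E_pm :: "complex \<Rightarrow> complex \<Rightarrow> complex \<Rightarrow> complex" where
  "E_pm p w x = E p (x * w) * E p (x / w)"

lemma holomorphic_E_pm: "norm p < 1 \<Longrightarrow> w \<noteq> 0 \<Longrightarrow> E_pm p w holomorphic_on -{0}"
  by (auto simp: E_pm_def[abs_def] intro!: holomorphic_intros)

lemma holomorphic_E_pm_param: "norm p < 1 \<Longrightarrow> x \<noteq> 0 \<Longrightarrow> (\<lambda>w. E_pm p w x) holomorphic_on -{0}"
  by (auto simp: E_pm_def intro!: holomorphic_intros)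

lemma E_pm_mult_p:
  assumes "norm p < 1" "p \<noteq> 0" "w \<noteq> 0" "x \<noteq> 0"
  shows "E_pm p w (p * x) = E_pm p w x / x\<^sup>2"
  using assms E_mult_p[OF assms(1,2), of "x * w"] E_mult_p[OF assms(1,2), of "x / w"]
  by (simp add: E_pm_def mult.assoc power2_eq_square)

lemma E_pm_inverse:
  assumes "norm p < 1" "w \<noteq> 0" "x \<noteq> 0"
  shows "E_pm p w (1 / x) = E_pm p w x / x\<^sup>2"
  using assms E_inverse[OF assms(1), of "x * w"] E_inverse[OF assms(1), of "x / w"]
  by (simp add: E_pm_def power2_eq_square)

lemma E_pm_self: "norm p < 1 \<Longrightarrow> w \<noteq> 0 \<Longrightarrow> E_pm p w w = 0"
  by (simp add: E_pm_def E_1)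

lemma E_pm_swap:
  assumes "norm p < 1" "w \<noteq> 0" "x \<noteq> 0"
  shows "E_pm p x w = - (w / x) * E_pm p w x"
  using assms E_inverse[OF assms(1), of "x / w"] by (simp add: E_pm_def mult.commute)

lemma E_pm_eq_0_imp:
  assumes "norm p < 1" "w \<noteq> 0" "x \<noteq> 0" "E_pm p w x = 0"
  shows "\<exists>m::int. x = p powi m / w \<or> x = p powi m * w"
proof -
  have "E p (x * w) = 0 \<or> E p (x / w) = 0"
    using assms(4) by (simp add: E_pm_def)
  then show ?thesis
  proof
    assume zero: "E p (x * w) = 0"
    have "x * w \<noteq> 0"
      using assms(2,3) by simp
    then obtain m where "x * w = p powi m"
      using E_eq_0_imp_powi[OF assms(1) _ zero] by blast
    then have "x = p powi m / w"
      using assms(2) by (simp add: field_simps)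
    then show ?thesis by blast
  next
    assume zero: "E p (x / w) = 0"
    have "x / w \<noteq> 0"
      using assms(2,3) by simp
    then obtain m where "x / w = p powi m"
      using E_eq_0_imp_powi[OF assms(1) _ zero] by blast
    then have "x = p powi m * w"
      using assms(2) by (simp add: field_simps)
    then show ?thesis by blast
  qed
qed

lemma E_mult_div_not_both_zero:
  assumes p: "norm p < 1" "p \<noteq> 0" and w: "w \<noteq> 0" "\<And>m::int. w\<^sup>2 \<noteq> p powi m"
    and x: "x \<noteq> 0" "E p (x * w) = 0"
  shows "E p (x / w) \<noteq> 0"
proof
  assume zero: "E p (x / w) = 0"
  have "x * w \<noteq> 0" "x / w \<noteq> 0"
    using x(1) w(1) by auto
  then obtain i j where i: "x * w = p powi i" and j: "x / w = p powi j"
    using E_eq_0_imp_powi[OF p(1) _ x(2)] E_eq_0_imp_powi[OF p(1) _ zero] by meson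
  have "w\<^sup>2 = (x * w) / (x / w)"
    using x(1) w(1) by (simp add: power2_eq_square)
  also have "\<dots> = p powi (i - j)"
    using p(2) by (simp add: i j power_int_diff)
  finally show False
    using w(2) by blast
qed

lemma simple_zero_E_pm:
  assumes p: "norm p < 1" "p \<noteq> 0" and w: "w \<noteq> 0" "\<And>m::int. w\<^sup>2 \<noteq> p powi m"
    and x: "x \<noteq> 0" "E_pm p w x = 0"
  shows "simple_zero_on (-{0}) (E_pm p w) x"
proof -
  have holo: "(\<lambda>y. E p (y * w)) holomorphic_on -{0}" "(\<lambda>y. E p (y / w)) holomorphic_on -{0}"
    using p w by (auto intro!: holomorphic_intros)
  have "E p (x * w) = 0 \<or> E p (x / w) = 0"
    using x(2) by (simp add: E_pm_def)
  then have "simple_zero_on (-{0}) (\<lambda>y. E p (y * w) * E p (y / w)) x"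
  proof
    assume zero: "E p (x * w) = 0"
    have "simple_zero_on (-{0}) (\<lambda>y. E p (w * y)) x"
      using simple_zero_E[OF p, of "w * x"] zero x(1) w(1)
      by (intro simple_zero_on_punctured_scale) (auto simp: mult.commute)
    moreover have "(\<lambda>y. E p (w * y)) = (\<lambda>y. E p (y * w))"
      by (simp add: mult.commute)
    ultimately show ?thesis
      using simple_zero_on_mult(1)[OF _ holo(2)] E_mult_div_not_both_zero[OF p w x(1) zero] by simp
  next
    assume zero: "E p (x / w) = 0"
    have "simple_zero_on (-{0}) (\<lambda>y. E p (1 / w * y)) x"
      using simple_zero_E[OF p, of "1 / w * x"] zero x(1) w(1)
      by (intro simple_zero_on_punctured_scale) auto
    then show ?thesis
      using simple_zero_on_mult(2)[OF _ holo(1)] E_mult_div_not_both_zero[OF p w x(1)] zero by auto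
  qed
  then show ?thesis
    by (simp add: E_pm_def[abs_def])
qed

lemma E_pm_addition_generic:
  assumes p: "norm p < 1" "p \<noteq> 0" and nz: "x \<noteq> 0" "y \<noteq> 0" "u \<noteq> 0" "v \<noteq> 0"
    and generic: "\<And>m::int. u\<^sup>2 \<noteq> p powi m" "E_pm p u v \<noteq> 0"
  shows "E_pm p y x * E_pm p v u - E_pm p v x * E_pm p y u = u / y * E_pm p v y * E_pm p u x"
proof -
  define N where "N z = E_pm p y z * E_pm p v u - E_pm p v z * E_pm p y u" for z
  have N_mult_p: "N (p * x) = N x / x\<^sup>2" if "x \<noteq> 0" for x
    using that nz by (simp add: N_def E_pm_mult_p[OF p] diff_divide_distrib)
  have N_holo: "N holomorphic_on -{0}"
    unfolding N_def[abs_def] using p nz by (intro holomorphic_intros holomorphic_E_pm)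
  have N_zeros: "N x = 0" if x: "x \<noteq> 0" "E_pm p u x = 0" for x
  proof -
    have "N u = 0" "N (1 / u) = 0"
      using p nz by (simp_all add: N_def E_pm_inverse diff_divide_distrib)
    moreover have invariant: "(N (p powi m * z) = 0) = (N z = 0)" if "z \<noteq> 0" for m z
      using p N_mult_p that by (intro powi_mult_invariant) auto
    moreover obtain m where "x = p powi m / u \<or> x = p powi m * u"
      using E_pm_eq_0_imp[OF p(1) nz(3) x] by blast
    ultimately show ?thesis
      using invariant[of "1 / u" m] invariant[of u m] nz(3) by auto
  qed
  have "\<exists>K. \<forall>x. x \<noteq> 0 \<longrightarrow> N x = K * E_pm p u x"
    using nz N_zeros simple_zero_E_pm[OF p nz(3) generic(1)]
    by (intro quasiperiodic_quotient_constant[OF p N_holo holomorphic_E_pm[OF p(1) nz(3)],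
        where a="\<lambda>x. 1 / x\<^sup>2"]) (simp_all add: N_mult_p E_pm_mult_p[OF p])
  then obtain K where K: "\<And>x. x \<noteq> 0 \<Longrightarrow> N x = K * E_pm p u x"
    by blast
  have "N v = E_pm p y v * E_pm p v u"
    using p nz by (simp add: N_def E_pm_self)
  also have "\<dots> = u / y * E_pm p v y * E_pm p u v"
    using nz by (simp add: E_pm_swap[OF p(1) nz(4) nz(2)] E_pm_swap[OF p(1) nz(3) nz(4)])
  finally have "K * E_pm p u v = u / y * E_pm p v y * E_pm p u v"
    using K[OF nz(4)] by simp
  then have "K = u / y * E_pm p v y"
    using generic(2) mult_right_cancel by blast
  then show ?thesis
    using K[OF nz(1)] by (simp add: N_def)
qed

lemma continuous_on_eq_const_off_countable:
  fixes f :: "'a::euclidean_space \<Rightarrow> 'b::t1_space"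
  assumes "open A" "continuous_on A f" "countable C" "\<And>z. z \<in> A - C \<Longrightarrow> f z = c" "z \<in> A"
  shows "f z = c"
proof (rule ccontr)
  assume "f z \<noteq> c"
  then obtain e where e: "e > 0" "\<And>y. dist z y < e \<Longrightarrow> f y \<noteq> c"
    using continuous_on_open_avoid[OF assms(2,1,5)] by blast
  obtain e' where e': "e' > 0" "ball z e' \<subseteq> A"
    using assms(1,5) openE by blast
  have "ball z (min e e') - C \<noteq> {}"
    by (rule ball_minus_countable_nonempty[OF assms(3)]) (use e(1) e'(1) in auto)
  then obtain y where "y \<in> ball z (min e e') - C"
    by blast
  then show False
    using assms(4)[of y] e(2)[of y] e'(2) by auto
qed

lemma countable_E_pm_exceptional:
  assumes p: "norm p < 1" "p \<noteq> 0" and v: "v \<noteq> 0"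
  shows "countable {u. u \<noteq> 0 \<and> ((\<exists>m::int. u\<^sup>2 = p powi m) \<or> E_pm p u v = 0)}"
proof (rule countable_subset)
  show "countable ((\<Union>m::int. {csqrt (p powi m), - csqrt (p powi m)})
      \<union> range (\<lambda>m::int. p powi m / v) \<union> range (\<lambda>m::int. v / p powi m))"
    by simp
  have "u \<in> range (\<lambda>m::int. p powi m / v) \<union> range (\<lambda>m::int. v / p powi m)"
    if u: "u \<noteq> 0" "E_pm p u v = 0" for u
  proof -
    obtain m where "v = p powi m / u \<or> v = p powi m * u"
      using E_pm_eq_0_imp[OF p(1) u(1) v u(2)] by blast
    then have "u = p powi m / v \<or> u = v / p powi m"
      using u(1) v p(2) by (auto simp: field_simps)
    then show ?thesis
      by auto
  qed
  then show "{u. u \<noteq> 0 \<and> ((\<exists>m::int. u\<^sup>2 = p powi m) \<or> E_pm p u v = 0)} \<subseteq>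
      (\<Union>m::int. {csqrt (p powi m), - csqrt (p powi m)})
      \<union> range (\<lambda>m::int. p powi m / v) \<union> range (\<lambda>m::int. v / p powi m)"
    by (auto simp: power2_eq_iff[of _ "csqrt _", simplified])
qed

lemma E_pm_addition:
  assumes p: "norm p < 1" and nz: "x \<noteq> 0" "y \<noteq> 0" "u \<noteq> 0" "v \<noteq> 0"
  shows "E_pm p y x * E_pm p v u - E_pm p v x * E_pm p y u = u / y * E_pm p v y * E_pm p u x"
proof (cases "p = 0")
  case True
  then show ?thesis
    using nz by (simp add: E_pm_def E_nome_0 field_simps)
next
  case False
  define F where "F u = E_pm p y x * E_pm p v u - E_pm p v x * E_pm p y u
      - u / y * E_pm p v y * E_pm p u x" for u
  have F_cont: "continuous_on (-{0}) F"
    unfolding F_def[abs_def] using p nz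
    by (intro holomorphic_on_imp_continuous_on holomorphic_intros holomorphic_E_pm
        holomorphic_E_pm_param) auto
  have F_generic: "F w = 0"
    if "w \<in> -{0} - {u. u \<noteq> 0 \<and> ((\<exists>m::int. u\<^sup>2 = p powi m) \<or> E_pm p u v = 0)}" for w
    using that E_pm_addition_generic[OF p False nz(1,2) _ nz(4)] by (auto simp: F_def)
  have "F u = 0"
    using continuous_on_eq_const_off_countable[OF _ F_cont
        countable_E_pm_exceptional[OF p False nz(4)] F_generic] nz(3) by blast
  then show ?thesis
    by (simp add: F_def)
qed

lemma prod_diff_telescoping:
  fixes A B :: "nat \<Rightarrow> 'a::comm_ring_1"
  shows "(\<Sum>k=0..n. (A k - B k) * (\<Prod>j=0..<k. A j) * (\<Prod>j\<in>{k<..n}. B j))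
       = (\<Prod>j=0..n. A j) - (\<Prod>j=0..n. B j)"
proof (induction n)
  case (Suc n)
  have "{k<..Suc n} = insert (Suc n) {k<..n}" if "k \<le> n" for k
    using that by auto
  then have "(\<Sum>k=0..n. (A k - B k) * (\<Prod>j=0..<k. A j) * (\<Prod>j\<in>{k<..Suc n}. B j))
      = B (Suc n) * ((\<Prod>j=0..n. A j) - (\<Prod>j=0..n. B j))"
    by (simp add: Suc.IH[symmetric] sum_distrib_left mult_ac)
  then show ?case
    by (simp add: atLeastLessThanSuc_atLeastAtMost algebra_simps)
qed simp

theorem lemma3p1:
  fixes p :: complex and n :: nat and a b c d :: "nat \<Rightarrow> complex"
  assumes "norm p < 1"
    and "\<And>j. j \<le> n \<Longrightarrow> a j \<noteq> 0 \<and> b j \<noteq> 0 \<and> c j \<noteq> 0 \<and> d j \<noteq> 0"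
  shows "(\<Sum>k=0..n. b k / c k * E p (a k * b k) * E p (a k / b k) * E p (c k * d k) * E p (c k / d k)
            * (\<Prod>j=0..<k. E p (a j * c j) * E p (a j / c j) * E p (b j * d j) * E p (b j / d j))
            * (\<Prod>j\<in>{k<..n}. E p (a j * d j) * E p (a j / d j) * E p (b j * c j) * E p (b j / c j)))
         = (\<Prod>j=0..n. E p (a j * c j) * E p (a j / c j) * E p (b j * d j) * E p (b j / d j))
         - (\<Prod>j=0..n. E p (a j * d j) * E p (a j / d j) * E p (b j * c j) * E p (b j / c j))"
proof -
  define A where "A j = E p (a j * c j) * E p (a j / c j) * E p (b j * d j) * E p (b j / d j)" for j
  define B where "B j = E p (a j * d j) * E p (a j / d j) * E p (b j * c j) * E p (b j / c j)" for j
  have addition: "b k / c k * E p (a k * b k) * E p (a k / b k) * E p (c k * d k) * E p (c k / d k)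
      = A k - B k" if "k \<le> n" for k
    using E_pm_addition[OF assms(1), of "a k" "c k" "b k" "d k"] assms(2)[OF that]
    by (simp add: A_def B_def E_pm_def mult_ac)
  have "(\<Sum>k=0..n. b k / c k * E p (a k * b k) * E p (a k / b k) * E p (c k * d k) * E p (c k / d k)
            * (\<Prod>j=0..<k. E p (a j * c j) * E p (a j / c j) * E p (b j * d j) * E p (b j / d j))
            * (\<Prod>j\<in>{k<..n}. E p (a j * d j) * E p (a j / d j) * E p (b j * c j) * E p (b j / c j)))
      = (\<Sum>k=0..n. (A k - B k) * (\<Prod>j=0..<k. A j) * (\<Prod>j\<in>{k<..n}. B j))"
    by (rule sum.cong[OF refl]) (simp only: addition atLeastAtMost_iff A_def B_def)
  also have "\<dots> = (\<Prod>j=0..n. A j) - (\<Prod>j=0..n. B j)"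
    by (rule prod_diff_telescoping)
  finally show ?thesis
    unfolding A_def B_def .
qed

end
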